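(* Consider a market in which every hospital values all contracts equally, i.e. for each $h\in H$ there is $\gamma_h>0$ with $f_h(Y)=\gamma_h|Y|$ for all $Y\subseteq X_h$. For each $h$, let $\mathrm{Ch}_h$ be the choice function that, given $X'\subseteq X_h$, sorts $X'$ in non-decreasing order of wage (ties broken by a fixed order), starts with $Y=\emptyset$, goes through the sorted contracts adding each contract $x$ to $Y$ if $w_h(Y\cup\{x\})\le B_h$, and returns $Y$. Then the generalized deferred acceptance mechanism with these choice functions is strategy-proof for doctors and produces a $B_H$-stable matching.
   Context: A market consists of a finite set of doctors $D$, a finite set of hospitals $H$, a finite set of contracts $X\subseteq D\times H\times\mathbb{R}_{>0}$ (contract $x=(d,h,w)$ has doctor $x_D=d$, hospital $x_H=h$, wage $x_W=w$), strict preferences $\succ_d$ of each doctor $d$ over $X_d\cup\{\emptyset\}$, utilities $f_h$ of each hospital on subsets of $X_h$, and budgets $B_H=(B_h)_h$, $B_h>0$, with $0<x_W\le B_h$ for all $x\in X_h$. For $Y\subseteq X$: $Y_d=\{x\in Y:x_D=d\}$, $Y_h=\{x\in Y:x_H=h\}$, $w_h(Y)=\sum_{x\in Y_h}x_W$. A matching is $Y\subseteq X$ with $|Y_d|\le1$ for all $d$. A matching $Y$ is $B_H$-feasible if $w_h(Y)\le B_h$ for all $h$; a matching $Z\subseteq X_h$ blocks $Y$ if every doctor $x_D$ with $x\in Z\setminus Y$ strictly prefers $x$ to her contract in $Y$ (or to $\emptyset$), $f_h(Z)>f_h(Y_h)$ and $w_h(Z)\le B_h$; $Y$ is $B_H$-stable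 if it is $B_H$-feasible and not blocked by any $h$ and $Z\subseteq X_h$. Generalized deferred acceptance with hospital choice functions $\mathrm{Ch}_h$: let $\mathrm{Ch}_H(Y)=\bigcup_h\mathrm{Ch}_h(Y_h)$; $\mathrm{Ch}_d(Y)=\{x\}$ for the $\succ_d$-best $x\in Y_d$ if $x\succ_d\emptyset$, else $\emptyset$; $\mathrm{Ch}_D(Y)=\bigcup_d\mathrm{Ch}_d(Y_d)$. Set $R^{(0)}=\emptyset$; for $i=1,2,\dots$: $Y^{(i)}=\mathrm{Ch}_D(X\setminus R^{(i-1)})$, $Z^{(i)}=\mathrm{Ch}_H(Y^{(i)})$, $R^{(i)}=R^{(i-1)}\cup(Y^{(i)}\setminus Z^{(i)})$; if $Y^{(i)}=Z^{(i)}$, output $Y^{(i)}$. This is a mechanism mapping reported doctor preference profiles to matchings; it is strategy-proof for doctors if for every doctor $d$, every profile $\succ_D$ and every alternative report $\succ'_d$, the outcome of $d$ under $\succ_D$ is weakly $\succ_d$-preferred to her outcome under $(\succ'_d,\succ_{-d})$. *)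

theory Defs
  imports Complex_Main
begin

type_synonym ('d, 'h) contract = "'d \<times> 'h \<times> real"

definition doc :: "('d, 'h) contract \<Rightarrow> 'd" where "doc x = fst x"
definition hosp :: "('d, 'h) contract \<Rightarrow> 'h" where "hosp x = fst (snd x)"
definition wage :: "('d, 'h) contract \<Rightarrow> real" where "wage x = snd (snd x)"

definition contracts_of_doc :: "('d, 'h) contract set \<Rightarrow> 'd \<Rightarrow> ('d, 'h) contract set" where
  "contracts_of_doc Y d = {x \<in> Y. doc x = d}"

definition contracts_of_hosp :: "('d, 'h) contract set \<Rightarrow> 'h \<Rightarrow> ('d, 'h) contract set" where
  "contracts_of_hosp Y h = {x \<in> Y. hosp x = h}"

definition wsum :: "('d, 'h) contract set \<Rightarrow> real" where
  "wsum Y = (\<Sum>x\<in>Y. wage x)"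

definition w_h :: "'h \<Rightarrow> ('d, 'h) contract set \<Rightarrow> real" where
  "w_h h Y = wsum (contracts_of_hosp Y h)"

text \<open>A (reported) preference of a doctor: a strict relation on contract options
  (None = being unmatched). A preference profile assigns one to every doctor.\<close>
type_synonym ('d, 'h) pref = "('d, 'h) contract option \<Rightarrow> ('d, 'h) contract option \<Rightarrow> bool"
type_synonym ('d, 'h) profile = "'d \<Rightarrow> ('d, 'h) pref"

definition strict_order_on :: "'a set \<Rightarrow> ('a \<Rightarrow> 'a \<Rightarrow> bool) \<Rightarrow> bool" where
  "strict_order_on A p \<longleftrightarrow>
     (\<forall>a\<in>A. \<not> p a a) \<and>
     (\<forall>a\<in>A. \<forall>b\<in>A. \<forall>c\<in>A. p a b \<longrightarrow> p b c \<longrightarrow> p a c) \<and>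
     (\<forall>a\<in>A. \<forall>b\<in>A. a \<noteq> b \<longrightarrow> p a b \<or> p b a)"

definition valid_pref :: "('d, 'h) contract set \<Rightarrow> 'd \<Rightarrow> ('d, 'h) pref \<Rightarrow> bool" where
  "valid_pref X d p \<longleftrightarrow> strict_order_on (insert None (Some ` contracts_of_doc X d)) p"

definition valid_profile :: "'d set \<Rightarrow> ('d, 'h) contract set \<Rightarrow> ('d, 'h) profile \<Rightarrow> bool" where
  "valid_profile D X P \<longleftrightarrow> (\<forall>d\<in>D. valid_pref X d (P d))"

definition is_matching :: "('d, 'h) contract set \<Rightarrow> bool" where
  "is_matching Y \<longleftrightarrow> (\<forall>d. card (contracts_of_doc Y d) \<le> 1 \<and> finite (contracts_of_doc Y d))"

definition outcome :: "('d, 'h) contract set \<Rightarrow> 'd \<Rightarrow> ('d, 'h) contract option" where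
  "outcome Y d = (if \<exists>x\<in>Y. doc x = d then Some (THE x. x \<in> Y \<and> doc x = d) else None)"

definition feasible :: "'h set \<Rightarrow> ('h \<Rightarrow> real) \<Rightarrow> ('d, 'h) contract set \<Rightarrow> bool" where
  "feasible H B Y \<longleftrightarrow> (\<forall>h\<in>H. w_h h Y \<le> B h)"

definition blocks ::
  "('d, 'h) contract set \<Rightarrow> ('d, 'h) profile \<Rightarrow> ('h \<Rightarrow> ('d, 'h) contract set \<Rightarrow> real)
   \<Rightarrow> ('h \<Rightarrow> real) \<Rightarrow> 'h \<Rightarrow> ('d, 'h) contract set \<Rightarrow> ('d, 'h) contract set \<Rightarrow> bool" where
  "blocks X P f B h Z Y \<longleftrightarrow>
     Z \<subseteq> contracts_of_hosp X h \<and> is_matching Z \<and>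
     (\<forall>x\<in>Z - Y. P (doc x) (Some x) (outcome Y (doc x))) \<and>
     f h Z > f h (contracts_of_hosp Y h) \<and>
     w_h h Z \<le> B h"

definition stable ::
  "'h set \<Rightarrow> ('d, 'h) contract set \<Rightarrow> ('d, 'h) profile \<Rightarrow> ('h \<Rightarrow> ('d, 'h) contract set \<Rightarrow> real)
   \<Rightarrow> ('h \<Rightarrow> real) \<Rightarrow> ('d, 'h) contract set \<Rightarrow> bool" where
  "stable H X P f B Y \<longleftrightarrow>
     Y \<subseteq> X \<and> is_matching Y \<and> feasible H B Y \<and>
     \<not> (\<exists>h\<in>H. \<exists>Z. blocks X P f B h Z Y)"

definition Ch_D :: "('d, 'h) profile \<Rightarrow> ('d, 'h) contract set \<Rightarrow> ('d, 'h) contract set" where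
  "Ch_D P Y = {x \<in> Y. P (doc x) (Some x) None \<and>
                 (\<forall>y\<in>Y. doc y = doc x \<and> y \<noteq> x \<longrightarrow> P (doc x) (Some x) (Some y))}"

text \<open>Generalized deferred acceptance with hospitals' joint choice function ChH.
  gda_R k is R^(k); the round-(k+1) proposals are Ch_D(X - R^(k)).\<close>
primrec gda_R ::
  "('d, 'h) contract set \<Rightarrow> (('d, 'h) contract set \<Rightarrow> ('d, 'h) contract set) \<Rightarrow> ('d, 'h) profile
   \<Rightarrow> nat \<Rightarrow> ('d, 'h) contract set" where
  "gda_R X ChH P 0 = {}"
| "gda_R X ChH P (Suc k) =
     (let Y = Ch_D P (X - gda_R X ChH P k) in gda_R X ChH P k \<union> (Y - ChH Y))"

definition gda_Y ::
  "('d, 'h) contract set \<Rightarrow> (('d, 'h) contract set \<Rightarrow> ('d, 'h) contract set) \<Rightarrow> ('d, 'h) profile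
   \<Rightarrow> nat \<Rightarrow> ('d, 'h) contract set" where
  "gda_Y X ChH P k = Ch_D P (X - gda_R X ChH P k)"

definition gda ::
  "('d, 'h) contract set \<Rightarrow> (('d, 'h) contract set \<Rightarrow> ('d, 'h) contract set) \<Rightarrow> ('d, 'h) profile
   \<Rightarrow> ('d, 'h) contract set" where
  "gda X ChH P = gda_Y X ChH P (LEAST k. gda_Y X ChH P k = ChH (gda_Y X ChH P k))"

text \<open>Greedy hospital choice: sort by non-decreasing wage, ties broken by the
  position in the fixed list ord (sort_key is stable), add a contract whenever
  the total wage stays within the budget.\<close>
definition greedy_choice ::
  "('d, 'h) contract list \<Rightarrow> real \<Rightarrow> ('d, 'h) contract set \<Rightarrow> ('d, 'h) contract set" where
  "greedy_choice ord b X' =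
     fold (\<lambda>x Y. if wsum (insert x Y) \<le> b then insert x Y else Y)
          (sort_key wage (filter (\<lambda>x. x \<in> X') ord)) {}"

definition greedy_ChH ::
  "'h set \<Rightarrow> ('h \<Rightarrow> real) \<Rightarrow> ('d, 'h) contract list \<Rightarrow> ('d, 'h) contract set \<Rightarrow> ('d, 'h) contract set" where
  "greedy_ChH H B ord Y = (\<Union>h\<in>H. greedy_choice ord (B h) (contracts_of_hosp Y h))"

definition strategy_proof ::
  "'d set \<Rightarrow> ('d, 'h) contract set \<Rightarrow> (('d, 'h) profile \<Rightarrow> ('d, 'h) contract set) \<Rightarrow> bool" where
  "strategy_proof D X M \<longleftrightarrow>
     (\<forall>P d p'. valid_profile D X P \<longrightarrow> d \<in> D \<longrightarrow> valid_pref X d p' \<longrightarrow>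
        (let a = outcome (M P) d; b = outcome (M (P(d := p'))) d in a = b \<or> P d a b))"

definition market ::
  "'d set \<Rightarrow> 'h set \<Rightarrow> ('d, 'h) contract set \<Rightarrow> ('h \<Rightarrow> real) \<Rightarrow> bool" where
  "market D H X B \<longleftrightarrow> finite D \<and> finite H \<and> finite X \<and>
     (\<forall>x\<in>X. doc x \<in> D \<and> hosp x \<in> H \<and> 0 < wage x \<and> wage x \<le> B (hosp x)) \<and>
     (\<forall>h\<in>H. B h > 0)"

end

theory Submission
  imports Defs
begin

text \<open>
  The greedy choice functions are substitutable and satisfy the law of aggregate demand: a
  contract kept from a larger set of offers is kept from a smaller one, and scanning in order of
  increasing wage yields an affordable set of maximum cardinality. For such choice functions
  generalized deferred acceptance ends in the doctor-optimal stable outcome, and all stable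
  outcomes match the same doctors (rural hospitals theorem). Strategy-proofness follows by a
  truncation argument: if a doctor d obtains x by misreporting, x is better for her than her
  truthful outcome; then truncating her true list just below x leaves her unmatched, whereas
  declaring only x acceptable gets her matched, and both reports lead to stable outcomes of the
  same market, contradicting the rural hospitals theorem. Stability in the budget sense holds
  because a hospital valuing all contracts equally cannot beat its greedy choice from the
  contracts it holds or has rejected, and every blocking contract is of one of these kinds.
\<close>

section \<open>Greedy choice\<close>

lemma wsum_insert: "finite Y \<Longrightarrow> x \<notin> Y \<Longrightarrow> wsum (insert x Y) = wage x + wsum Y"
  by (simp add: wsum_def)

lemma wsum_mono: "finite T \<Longrightarrow> S \<subseteq> T \<Longrightarrow> \<forall>y\<in>T. 0 \<le> wage y \<Longrightarrow> wsum S \<le> wsum T"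
  unfolding wsum_def by (rule sum_mono2) auto

lemma wage_le_wsum: "finite T \<Longrightarrow> x \<in> T \<Longrightarrow> \<forall>y\<in>T. 0 \<le> wage y \<Longrightarrow> wage x \<le> wsum T"
  using wsum_mono[of T "{x}"] by (simp add: wsum_def)

primrec list_pos :: "'a list \<Rightarrow> 'a \<Rightarrow> nat" where
  "list_pos [] x = 0"
| "list_pos (a # L) x = (if a = x then 0 else Suc (list_pos L x))"

definition prefix_upto :: "'a list \<Rightarrow> 'a \<Rightarrow> 'a set" where
  "prefix_upto L x = {y \<in> set L. list_pos L y \<le> list_pos L x}"

lemma prefix_upto_Nil [simp]: "prefix_upto [] x = {}"
  by (simp add: prefix_upto_def)

lemma prefix_upto_Cons:
  "prefix_upto (a # L) x = (if a = x then {a} else insert a (prefix_upto L x))"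
  by (auto simp: prefix_upto_def)

lemma prefix_upto_filter: "P x \<Longrightarrow> prefix_upto (filter P L) x = {y \<in> prefix_upto L x. P y}"
  by (induction L) (auto simp: prefix_upto_Cons)

lemma list_pos_inj_on: "distinct L \<Longrightarrow> inj_on (list_pos L) (set L)"
  by (induction L) (auto simp: inj_on_def split: if_splits)

lemma sorted_wage_list_pos:
  "sorted (map wage L) \<Longrightarrow> x \<in> set L \<Longrightarrow> y \<in> set L \<Longrightarrow> list_pos L x < list_pos L y \<Longrightarrow> wage x \<le> wage y"
  by (induction L) (auto split: if_splits)

definition greedy_step :: "real \<Rightarrow> ('d, 'h) contract \<Rightarrow> ('d, 'h) contract set \<Rightarrow> ('d, 'h) contract set" where
  "greedy_step b x Y = (if wsum (insert x Y) \<le> b then insert x Y else Y)"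

text \<open>Along a wage-sorted list the greedy scan accepts exactly an initial segment: once a
  contract does not fit, no later (weakly more expensive) one fits either.\<close>
lemma fold_greedy_step:
  assumes "distinct L" "sorted (map wage L)" "\<forall>x\<in>set L. 0 < wage x"
    and "finite Y" "Y \<inter> set L = {}"
  shows "fold (greedy_step b) L Y = Y \<union> {x \<in> set L. wsum Y + wsum (prefix_upto L x) \<le> b}"
  using assms
proof (induction L arbitrary: Y)
  case Nil
  then show ?case by simp
next
  case (Cons a L)
  have aY: "a \<notin> Y" and aL: "a \<notin> set L" using Cons.prems by auto
  have pos: "\<forall>y\<in>set L. 0 \<le> wage y" using Cons.prems by auto
  have prefix_a: "wsum (prefix_upto (a # L) a) = wage a"
    by (simp add: prefix_upto_Cons wsum_def)
  have prefix_L: "wsum (prefix_upto (a # L) x) = wage a + wsum (prefix_upto L x)" if "x \<in> set L" for x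
  proof -
    have "prefix_upto (a # L) x = insert a (prefix_upto L x)" "a \<notin> prefix_upto L x"
      using that aL by (auto simp: prefix_upto_Cons prefix_upto_def)
    then show ?thesis by (simp add: wsum_insert prefix_upto_def)
  qed
  show ?case
  proof (cases "wsum Y + wage a \<le> b")
    case True
    have "fold (greedy_step b) (a # L) Y = fold (greedy_step b) L (insert a Y)"
      using True Cons.prems(4) aY by (simp add: greedy_step_def wsum_insert)
    also have "\<dots> = insert a Y \<union> {x \<in> set L. wsum (insert a Y) + wsum (prefix_upto L x) \<le> b}"
      using Cons by auto
    finally show ?thesis
      using True Cons.prems(4) aY aL prefix_a prefix_L by (auto simp: wsum_insert algebra_simps)
  next
    case False
    have none_fit: "\<not> wsum Y + wsum (prefix_upto (a # L) x) \<le> b" if "x \<in> set (a # L)" for x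
    proof -
      have "wage a \<le> wsum (prefix_upto (a # L) x)"
        using that Cons.prems(3) by (intro wage_le_wsum) (auto simp: prefix_upto_def)
      then show ?thesis using False by linarith
    qed
    have none_fit_L: "\<not> wsum Y + wsum (prefix_upto L x) \<le> b" if "x \<in> set L" for x
    proof -
      have "wage a \<le> wage x" using Cons.prems(2) that by simp
      also have "wage x \<le> wsum (prefix_upto L x)"
        using that pos by (intro wage_le_wsum) (auto simp: prefix_upto_def)
      finally show ?thesis using False by linarith
    qed
    have "fold (greedy_step b) (a # L) Y = fold (greedy_step b) L Y"
      using False Cons.prems(4) aY by (simp add: greedy_step_def wsum_insert)
    also have "\<dots> = Y" using Cons none_fit_L by auto
    finally show ?thesis using none_fit by auto
  qed
qed

definition greedy_set :: "('d, 'h) contract list \<Rightarrow> real \<Rightarrow> ('d, 'h) contract set \<Rightarrow> ('d, 'h) contract set" where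
  "greedy_set L b A = {x \<in> A \<inter> set L. wsum {y \<in> prefix_upto L x. y \<in> A} \<le> b}"

lemma greedy_choice_eq_greedy_set:
  assumes "distinct ord" "\<forall>x\<in>set ord. 0 < wage x"
  shows "greedy_choice ord b A = greedy_set (sort_key wage ord) b A"
proof -
  let ?L = "filter (\<lambda>x. x \<in> A) (sort_key wage ord)"
  have "greedy_choice ord b A = fold (greedy_step b) ?L {}"
    unfolding greedy_choice_def greedy_step_def by (simp add: filter_sort)
  also have "\<dots> = {x \<in> set ?L. wsum (prefix_upto ?L x) \<le> b}"
    using fold_greedy_step[of ?L "{}" b] assms by (simp add: sorted_filter wsum_def)
  also have "\<dots> = greedy_set (sort_key wage ord) b A"
    by (auto simp: greedy_set_def prefix_upto_filter)
  finally show ?thesis .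
qed

lemma sum_exchange_bound:
  fixes w :: "'a \<Rightarrow> real"
  assumes "finite G" "finite Z" "card G < card Z" "0 \<le> c"
    and "\<forall>z\<in>Z - G. c \<le> w z" "\<forall>g\<in>G - Z. w g \<le> c"
  shows "sum w G + c \<le> sum w Z"
proof -
  have "card G = card (G \<inter> Z) + card (G - Z)" "card Z = card (G \<inter> Z) + card (Z - G)"
    using assms(1,2) by (metis Int_commute card_Int_Diff)+
  then have "real (card (G - Z)) + 1 \<le> real (card (Z - G))" using assms(3) by linarith
  then have "real (card (G - Z)) * c + c \<le> real (card (Z - G)) * c"
    using assms(4) by (metis distrib_right mult_1 mult_right_mono)
  moreover have "sum w (G - Z) \<le> real (card (G - Z)) * c"
    using sum_bounded_above[of "G - Z" w c] assms(6) by simp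
  moreover have "real (card (Z - G)) * c \<le> sum w (Z - G)"
    using sum_bounded_below[of "Z - G" c w] assms(5) by simp
  moreover have "sum w G = sum w (G \<inter> Z) + sum w (G - Z)" "sum w Z = sum w (G \<inter> Z) + sum w (Z - G)"
    using assms(1,2) by (metis Int_commute sum.Int_Diff)+
  ultimately show ?thesis by linarith
qed

locale greedy =
  fixes L :: "('d, 'h) contract list" and b :: real
  assumes distinct: "distinct L"
    and sorted: "sorted (map wage L)"
    and wage_pos: "\<forall>x\<in>set L. 0 < wage x"
    and budget_nonneg: "0 \<le> b"
begin

abbreviation G :: "('d, 'h) contract set \<Rightarrow> ('d, 'h) contract set" where
  "G \<equiv> greedy_set L b"

lemma greedy_set_subset: "G A \<subseteq> A \<inter> set L"
  unfolding greedy_set_def by auto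

lemma finite_greedy_set: "finite (G A)"
  using greedy_set_subset by (rule finite_subset) simp

lemma wsum_mono_in_L: "S \<subseteq> T \<Longrightarrow> T \<subseteq> set L \<Longrightarrow> wsum S \<le> wsum T"
  using wage_pos by (intro wsum_mono) (auto intro: finite_subset less_imp_le)

lemma greedy_set_substitutable: "A \<subseteq> A' \<Longrightarrow> A \<inter> G A' \<subseteq> G A"
proof
  fix x assume "A \<subseteq> A'" and x: "x \<in> A \<inter> G A'"
  then have "wsum {y \<in> prefix_upto L x. y \<in> A} \<le> wsum {y \<in> prefix_upto L x. y \<in> A'}"
    by (intro wsum_mono_in_L) (auto simp: prefix_upto_def)
  then show "x \<in> G A" using x by (auto simp: greedy_set_def)
qed

lemma wage_mono: "x \<in> set L \<Longrightarrow> y \<in> set L \<Longrightarrow> list_pos L x \<le> list_pos L y \<Longrightarrow> wage x \<le> wage y"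
  using sorted_wage_list_pos[OF sorted] by (cases "list_pos L x = list_pos L y")
    (auto dest: inj_onD[OF list_pos_inj_on[OF distinct]])

lemma greedy_set_downward_closed:
  assumes "y \<in> G A" "z \<in> A \<inter> set L" "list_pos L z \<le> list_pos L y"
  shows "z \<in> G A"
proof -
  have "wsum {u \<in> prefix_upto L z. u \<in> A} \<le> wsum {u \<in> prefix_upto L y. u \<in> A}"
    using assms by (intro wsum_mono_in_L) (auto simp: prefix_upto_def)
  then show ?thesis using assms by (auto simp: greedy_set_def)
qed

lemma wsum_greedy_set_le: "wsum (G A) \<le> b"
proof (cases "G A = {}")
  case True
  then show ?thesis using budget_nonneg by (simp add: wsum_def)
next
  case False
  let ?M = "Max (list_pos L ` G A)"
  have "?M \<in> list_pos L ` G A" using False finite_greedy_set by (intro Max_in) auto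
  then obtain m where "?M = list_pos L m" "m \<in> G A" by (rule imageE)
  then have m: "m \<in> G A" "\<forall>y\<in>G A. list_pos L y \<le> list_pos L m"
    using Max_ge[OF finite_imageI[OF finite_greedy_set] imageI, of _ A "list_pos L"] by auto
  have "G A = {y \<in> prefix_upto L m. y \<in> A}"
  proof (intro equalityI subsetI)
    fix y assume "y \<in> G A"
    then show "y \<in> {y \<in> prefix_upto L m. y \<in> A}"
      using m(2) greedy_set_subset by (auto simp: prefix_upto_def)
  next
    fix y assume "y \<in> {y \<in> prefix_upto L m. y \<in> A}"
    then show "y \<in> G A"
      using greedy_set_downward_closed[OF m(1), of y] by (simp add: prefix_upto_def)
  qed
  moreover have "wsum {y \<in> prefix_upto L m. y \<in> A} \<le> b"
    using m(1) by (simp add: greedy_set_def)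
  ultimately show ?thesis by simp
qed

lemma greedy_set_first_rejected:
  assumes x0: "x0 \<in> A \<inter> set L - G A" and least: "\<forall>y\<in>A \<inter> set L - G A. list_pos L x0 \<le> list_pos L y"
  shows "G A = {y \<in> A \<inter> set L. list_pos L y < list_pos L x0}" and "b < wsum (G A) + wage x0"
proof -
  show G_eq: "G A = {y \<in> A \<inter> set L. list_pos L y < list_pos L x0}"
  proof (intro equalityI subsetI)
    fix y assume y: "y \<in> G A"
    then have "\<not> list_pos L x0 \<le> list_pos L y"
      using x0 greedy_set_downward_closed[of y A x0] by blast
    then show "y \<in> {y \<in> A \<inter> set L. list_pos L y < list_pos L x0}"
      using y greedy_set_subset by auto
  next
    fix y assume "y \<in> {y \<in> A \<inter> set L. list_pos L y < list_pos L x0}"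
    then show "y \<in> G A" using least by force
  qed
  have "{y \<in> prefix_upto L x0. y \<in> A} = insert x0 (G A)"
  proof (intro equalityI subsetI)
    fix y assume y: "y \<in> {y \<in> prefix_upto L x0. y \<in> A}"
    have "y = x0 \<or> list_pos L y \<noteq> list_pos L x0"
      using y x0 inj_onD[OF list_pos_inj_on[OF distinct], of y x0] by (auto simp: prefix_upto_def)
    then show "y \<in> insert x0 (G A)"
      using y by (auto simp: G_eq prefix_upto_def)
  next
    fix y assume "y \<in> insert x0 (G A)"
    then show "y \<in> {y \<in> prefix_upto L x0. y \<in> A}"
      using x0 by (auto simp: G_eq prefix_upto_def)
  qed
  moreover have "\<not> wsum {y \<in> prefix_upto L x0. y \<in> A} \<le> b"
    using x0 by (simp add: greedy_set_def)
  ultimately show "b < wsum (G A) + wage x0"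
    using x0 finite_greedy_set by (simp add: wsum_insert)
qed

text \<open>The greedy scan picks a maximum-cardinality affordable subset: any affordable set with more
  contracts would have to replace cheaper accepted contracts by ones at least as expensive as
  the first rejected contract.\<close>
lemma card_le_card_greedy_set:
  assumes Z: "Z \<subseteq> A \<inter> set L" "wsum Z \<le> b"
  shows "card Z \<le> card (G A)"
proof (cases "A \<inter> set L \<subseteq> G A")
  case True
  then show ?thesis using Z finite_greedy_set by (intro card_mono) auto
next
  case False
  obtain x0 where x0: "x0 \<in> A \<inter> set L - G A" "\<forall>y\<in>A \<inter> set L - G A. list_pos L x0 \<le> list_pos L y"
    using False ex_has_least_nat[of "\<lambda>x. x \<in> A \<inter> set L - G A" _ "list_pos L"] by blast
  note G_eq = greedy_set_first_rejected(1)[OF x0] and over = greedy_set_first_rejected(2)[OF x0]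
  show ?thesis
  proof (rule ccontr)
    assume "\<not> card Z \<le> card (G A)"
    then have "wsum (G A) + wage x0 \<le> wsum Z"
      unfolding wsum_def
    proof (intro sum_exchange_bound)
      show "finite Z" using Z(1) by (rule finite_subset) simp
      show "0 \<le> wage x0" using x0 wage_pos by (auto intro: less_imp_le)
      show "\<forall>z\<in>Z - G A. wage x0 \<le> wage z"
        using Z(1) x0 by (auto intro: wage_mono)
      show "\<forall>g\<in>G A - Z. wage g \<le> wage x0"
        using x0 by (auto simp: G_eq intro: wage_mono)
    qed (use finite_greedy_set in auto)
    then show False using over Z(2) by linarith
  qed
qed

lemma card_greedy_set_mono: "A \<subseteq> A' \<Longrightarrow> card (G A) \<le> card (G A')"
  using card_le_card_greedy_set[of "G A" A'] greedy_set_subset[of A] wsum_greedy_set_le[of A]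
  by auto

end

section \<open>Preferences and doctors' choices\<close>

text \<open>truncate_at p x keeps the ranking of contracts and makes acceptable exactly those weakly
  better than x; only_acceptable x p ranks x first and makes it the only acceptable contract.\<close>
definition truncate_at :: "('d, 'h) pref \<Rightarrow> ('d, 'h) contract \<Rightarrow> ('d, 'h) pref" where
  "truncate_at p x a b \<longleftrightarrow>
     (a \<noteq> None \<and> b \<noteq> None \<and> p a b) \<or>
     (a \<noteq> None \<and> b = None \<and> (a = Some x \<or> p a (Some x))) \<or>
     (a = None \<and> b \<noteq> None \<and> p (Some x) b)"

definition only_acceptable :: "('d, 'h) contract \<Rightarrow> ('d, 'h) pref \<Rightarrow> ('d, 'h) pref" where
  "only_acceptable x p a b \<longleftrightarrow>
     (a = Some x \<and> b \<noteq> Some x) \<or>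
     (a = None \<and> b \<noteq> None \<and> b \<noteq> Some x) \<or>
     (a \<noteq> None \<and> a \<noteq> Some x \<and> b \<noteq> None \<and> b \<noteq> Some x \<and> p a b)"

lemma strict_order_on_truncate_at:
  assumes "strict_order_on S p" "Some x \<in> S" "None \<in> S"
  shows "strict_order_on S (truncate_at p x)"
  using assms unfolding strict_order_on_def truncate_at_def
  by (intro conjI ballI impI) (metis+)

lemma strict_order_on_only_acceptable:
  assumes "strict_order_on S p"
  shows "strict_order_on S (only_acceptable x p)"
  using assms unfolding strict_order_on_def only_acceptable_def
  by (intro conjI ballI impI) (metis+)

lemma strict_order_on_subset: "strict_order_on S p \<Longrightarrow> T \<subseteq> S \<Longrightarrow> strict_order_on T p"
  unfolding strict_order_on_def by blast

lemma strict_order_on_has_top: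
  assumes "finite S" "S \<noteq> {}" "strict_order_on S p"
  shows "\<exists>m\<in>S. \<forall>y\<in>S. y \<noteq> m \<longrightarrow> p m y"
  using assms
proof (induction S rule: finite_ne_induct)
  case (singleton x)
  then show ?case by simp
next
  case (insert a F)
  then obtain m where m: "m \<in> F" "\<forall>y\<in>F. y \<noteq> m \<longrightarrow> p m y"
    using strict_order_on_subset by blast
  have "m \<noteq> a" using m(1) insert.hyps by blast
  then have "p a m \<or> p m a" using insert.prems m(1) unfolding strict_order_on_def by blast
  then show ?case
    using insert.prems m unfolding strict_order_on_def by (metis insert_iff)
qed

definition alternatives :: "('d, 'h) contract set \<Rightarrow> 'd \<Rightarrow> ('d, 'h) contract option set" where
  "alternatives X d = insert None (Some ` contracts_of_doc X d)"

lemma None_in_alternatives [simp]: "None \<in> alternatives X d"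
  by (simp add: alternatives_def)

lemma Some_in_alternatives [simp]: "Some x \<in> alternatives X d \<longleftrightarrow> x \<in> X \<and> doc x = d"
  by (auto simp: alternatives_def contracts_of_doc_def)

lemma valid_pref_iff: "valid_pref X d p \<longleftrightarrow> strict_order_on (alternatives X d) p"
  by (simp add: valid_pref_def alternatives_def)

context
  fixes X d p
  assumes valid: "valid_pref X d p"
begin

lemma valid_pref_irrefl: "a \<in> alternatives X d \<Longrightarrow> \<not> p a a"
  using valid unfolding valid_pref_iff strict_order_on_def by blast

lemma valid_pref_trans: "a \<in> alternatives X d \<Longrightarrow> b \<in> alternatives X d \<Longrightarrow> c \<in> alternatives X d \<Longrightarrow> p a b \<Longrightarrow> p b c \<Longrightarrow> p a c"
  using valid unfolding valid_pref_iff strict_order_on_def by blast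

lemma valid_pref_total: "a \<in> alternatives X d \<Longrightarrow> b \<in> alternatives X d \<Longrightarrow> a \<noteq> b \<Longrightarrow> p a b \<or> p b a"
  using valid unfolding valid_pref_iff strict_order_on_def by blast

lemma valid_pref_asym: "a \<in> alternatives X d \<Longrightarrow> b \<in> alternatives X d \<Longrightarrow> p a b \<Longrightarrow> \<not> p b a"
  using valid_pref_irrefl valid_pref_trans by blast

lemma valid_truncate_at: "x \<in> X \<Longrightarrow> doc x = d \<Longrightarrow> valid_pref X d (truncate_at p x)"
  using strict_order_on_truncate_at[of "alternatives X d" p x] valid unfolding valid_pref_iff by simp

lemma valid_only_acceptable: "valid_pref X d (only_acceptable x p)"
  using strict_order_on_only_acceptable[of "alternatives X d" p x] valid unfolding valid_pref_iff by simp

end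

lemma valid_profile_update: "valid_profile D X P \<Longrightarrow> valid_pref X d p \<Longrightarrow> valid_profile D X (P(d := p))"
  unfolding valid_profile_def by simp

lemma Ch_D_iff:
  "z \<in> Ch_D P A \<longleftrightarrow> z \<in> A \<and> P (doc z) (Some z) None \<and>
     (\<forall>y\<in>A. doc y = doc z \<and> y \<noteq> z \<longrightarrow> P (doc z) (Some z) (Some y))"
  unfolding Ch_D_def by auto

lemma Ch_D_subset: "Ch_D P A \<subseteq> A"
  unfolding Ch_D_def by auto

lemma Ch_D_acceptable: "z \<in> Ch_D P A \<Longrightarrow> P (doc z) (Some z) None"
  unfolding Ch_D_def by blast

lemma Ch_D_best: "z \<in> Ch_D P A \<Longrightarrow> y \<in> A \<Longrightarrow> doc y = doc z \<Longrightarrow> y \<noteq> z \<Longrightarrow> P (doc z) (Some z) (Some y)"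
  unfolding Ch_D_def by blast

lemma Ch_D_restrict: "z \<in> Ch_D P A \<Longrightarrow> z \<in> B \<Longrightarrow> B \<subseteq> A \<Longrightarrow> z \<in> Ch_D P B"
  unfolding Ch_D_def by auto

lemma Ch_D_idem: "Ch_D P (Ch_D P A) = Ch_D P A"
  using Ch_D_subset Ch_D_restrict by (metis subsetI subset_antisym)

lemma Ch_D_local: "P1 (doc z) = P2 (doc z) \<Longrightarrow> z \<in> Ch_D P1 A \<longleftrightarrow> z \<in> Ch_D P2 A"
  unfolding Ch_D_iff by simp

lemma outcome_eq_Some_iff:
  assumes "inj_on doc Y"
  shows "outcome Y d = Some y \<longleftrightarrow> y \<in> Y \<and> doc y = d"
proof -
  have the_eq: "(THE x. x \<in> Y \<and> doc x = d) = x" if "x \<in> Y" "doc x = d" for x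
    using that assms by (auto dest: inj_onD)
  show ?thesis
  proof
    assume "outcome Y d = Some y"
    then obtain x where "x \<in> Y" "doc x = d" "y = (THE x. x \<in> Y \<and> doc x = d)"
      unfolding outcome_def by (auto split: if_splits)
    then show "y \<in> Y \<and> doc y = d" using the_eq by simp
  next
    assume "y \<in> Y \<and> doc y = d"
    then show "outcome Y d = Some y" using the_eq unfolding outcome_def by auto
  qed
qed

lemma Ch_D_eq_self_iff:
  "inj_on doc Y \<Longrightarrow> Ch_D P Y = Y \<longleftrightarrow> (\<forall>z\<in>Y. P (doc z) (Some z) None)"
  unfolding Ch_D_def by (auto dest: inj_onD)

locale doctors =
  fixes D :: "'d set" and X :: "('d, 'h) contract set"
  assumes finite_X: "finite X"
    and doc_in_D: "\<forall>x\<in>X. doc x \<in> D"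
begin

lemma valid_pref_doc: "valid_profile D X P \<Longrightarrow> z \<in> X \<Longrightarrow> valid_pref X (doc z) (P (doc z))"
  using doc_in_D unfolding valid_profile_def by auto

lemma pref_asym:
  assumes "valid_profile D X P" "z \<in> X" "y \<in> X" "doc y = doc z" "P (doc z) (Some z) (Some y)"
  shows "\<not> P (doc z) (Some y) (Some z)"
  using valid_pref_asym[OF valid_pref_doc[OF assms(1,2)], of "Some z" "Some y"] assms by simp

lemma Ch_D_unique:
  assumes "valid_profile D X P" "A \<subseteq> X" "z \<in> Ch_D P A" "z' \<in> Ch_D P A" "doc z = doc z'"
  shows "z = z'"
  using assms pref_asym[of P z z'] Ch_D_best[of z P A z'] Ch_D_best[of z' P A z] Ch_D_subset
  by (metis subsetD)

lemma Ch_D_exists: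
  assumes P: "valid_profile D X P" and "A \<subseteq> X" and z: "z \<in> A" "P (doc z) (Some z) None"
  shows "\<exists>y\<in>Ch_D P A. doc y = doc z"
proof -
  let ?d = "doc z"
  let ?S = "insert None (Some ` {y \<in> A. doc y = ?d})"
  have valid: "valid_pref X ?d (P ?d)" using valid_pref_doc[OF P] z assms(2) by blast
  have S: "?S \<subseteq> alternatives X ?d" using assms(2) by auto
  have "finite ?S" using finite_subset[OF assms(2) finite_X] by simp
  moreover have "strict_order_on ?S (P ?d)"
    using strict_order_on_subset[OF _ S] valid by (simp add: valid_pref_iff)
  ultimately obtain m where m: "m \<in> ?S" "\<forall>y\<in>?S. y \<noteq> m \<longrightarrow> P ?d m y"
    using strict_order_on_has_top[of ?S "P ?d"] by blast
  have "m \<noteq> None"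
  proof
    assume "m = None"
    moreover have "Some z \<in> ?S" using z(1) by blast
    ultimately have "P ?d None (Some z)" using m(2) by force
    then show False using valid_pref_asym[OF valid, of "Some z" None] z assms(2) by auto
  qed
  then obtain y where y: "m = Some y" "y \<in> A" "doc y = ?d" using m(1) by auto
  have "P ?d (Some y) None" using m y by auto
  then have "y \<in> Ch_D P A" using m y unfolding Ch_D_iff by auto
  then show ?thesis using y by blast
qed

end

section \<open>Deferred acceptance with substitutable choice\<close>

text \<open>Stability in the sense of Hatfield and Milgrom, relative to the joint hospital choice C.\<close>
definition choice_stable ::
  "('d, 'h) contract set \<Rightarrow> (('d, 'h) contract set \<Rightarrow> ('d, 'h) contract set) \<Rightarrow> ('d, 'h) profile
   \<Rightarrow> ('d, 'h) contract set \<Rightarrow> bool" where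
  "choice_stable X C P Y \<longleftrightarrow> Y \<subseteq> X \<and> Ch_D P Y = Y \<and> C Y = Y \<and>
     (\<forall>Z. Z \<subseteq> X \<longrightarrow> Z \<noteq> {} \<longrightarrow> Z \<inter> Y = {} \<longrightarrow> Z \<subseteq> C (Y \<union> Z) \<longrightarrow> \<not> Z \<subseteq> Ch_D P (Y \<union> Z))"

lemma choice_stableD:
  assumes "choice_stable X C P Y"
  shows "Y \<subseteq> X" "Ch_D P Y = Y" "C Y = Y"
    and "Z \<subseteq> X \<Longrightarrow> Z \<noteq> {} \<Longrightarrow> Z \<inter> Y = {} \<Longrightarrow> Z \<subseteq> C (Y \<union> Z) \<Longrightarrow> \<not> Z \<subseteq> Ch_D P (Y \<union> Z)"
  using assms unfolding choice_stable_def by blast+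

lemma choice_stable_transfer:
  assumes "choice_stable X C P Y" "Ch_D P' Y = Y"
    and "\<And>Z. Z \<subseteq> X \<Longrightarrow> Z \<inter> Y = {} \<Longrightarrow> Z \<subseteq> Ch_D P' (Y \<union> Z) \<Longrightarrow> Z \<subseteq> Ch_D P (Y \<union> Z)"
  shows "choice_stable X C P' Y"
  unfolding choice_stable_def
proof (intro conjI allI impI notI)
  show "Y \<subseteq> X" "Ch_D P' Y = Y" "C Y = Y" using choice_stableD(1,3)[OF assms(1)] assms(2) by simp_all
next
  fix Z assume Z: "Z \<subseteq> X" "Z \<noteq> {}" "Z \<inter> Y = {}" "Z \<subseteq> C (Y \<union> Z)" "Z \<subseteq> Ch_D P' (Y \<union> Z)"
  then show False using choice_stableD(4)[OF assms(1) Z(1-4)] assms(3) by blast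
qed

declare gda_R.simps(2) [simp del]

locale choice_system = doctors D X for D :: "'d set" and X :: "('d, 'h) contract set" +
  fixes C :: "('d, 'h) contract set \<Rightarrow> ('d, 'h) contract set"
  assumes C_subset: "C A \<subseteq> A"
    and substitutes: "A \<subseteq> B \<Longrightarrow> B \<subseteq> X \<Longrightarrow> A \<inter> C B \<subseteq> C A"
    and aggregate_demand: "A \<subseteq> B \<Longrightarrow> B \<subseteq> X \<Longrightarrow> card (C A) \<le> card (C B)"
begin

lemma irrelevance_of_rejected: "C B \<subseteq> A \<Longrightarrow> A \<subseteq> B \<Longrightarrow> B \<subseteq> X \<Longrightarrow> C A = C B"
proof -
  assume A: "C B \<subseteq> A" "A \<subseteq> B" "B \<subseteq> X"
  have sub: "C B \<subseteq> C A" using substitutes[OF A(2,3)] A(1) by blast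
  have "finite (C A)" using C_subset[of A] A finite_X by (meson finite_subset)
  then show ?thesis
    using card_subset_eq[OF _ sub] aggregate_demand[OF A(2,3)] card_mono[OF _ sub] by simp
qed

abbreviation rejections :: "('d, 'h) profile \<Rightarrow> nat \<Rightarrow> ('d, 'h) contract set" where
  "rejections P k \<equiv> gda_R X C P k"

abbreviation offers :: "('d, 'h) profile \<Rightarrow> nat \<Rightarrow> ('d, 'h) contract set" where
  "offers P k \<equiv> gda_Y X C P k"

lemma rejections_Suc: "rejections P (Suc k) = rejections P k \<union> (offers P k - C (offers P k))"
  unfolding gda_R.simps(2) gda_Y_def Let_def ..

lemma offers_subset: "offers P k \<subseteq> X - rejections P k"
  unfolding gda_Y_def by (rule Ch_D_subset)

lemma rejections_subset: "rejections P k \<subseteq> X"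
proof (induction k)
  case 0
  then show ?case by simp
next
  case (Suc k)
  then show ?case using offers_subset[of P k] unfolding rejections_Suc by blast
qed

lemma rejections_mono: "j \<le> k \<Longrightarrow> rejections P j \<subseteq> rejections P k"
proof (induction k)
  case 0
  then show ?case by simp
next
  case (Suc k)
  then consider "j = Suc k" | "j \<le> k" by linarith
  then show ?case
  proof cases
    case 1
    then show ?thesis by simp
  next
    case 2
    then show ?thesis using Suc.IH unfolding rejections_Suc by blast
  qed
qed

lemma offers_persist: "j \<le> k \<Longrightarrow> z \<in> offers P j \<Longrightarrow> z \<in> offers P k \<union> rejections P k"
proof -
  assume jk: "j \<le> k" and z: "z \<in> offers P j"
  have "z \<in> X" using z offers_subset by blast
  moreover have "X - rejections P k \<subseteq> X - rejections P j" using rejections_mono[OF jk] by blast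
  ultimately show ?thesis
    using Ch_D_restrict[of z P "X - rejections P j" "X - rejections P k"] z unfolding gda_Y_def by blast
qed

lemma rejected_in_earlier_round: "z \<in> rejections P k \<Longrightarrow> \<exists>j<k. z \<in> offers P j \<and> z \<notin> C (offers P j)"
proof (induction k)
  case 0
  then show ?case by simp
next
  case (Suc k)
  then show ?case unfolding rejections_Suc by (metis Diff_iff Un_iff less_Suc_eq lessI)
qed

text \<open>By substitutability, a contract rejected in some round stays rejected when offered
  again together with everything proposed so far.\<close>
lemma C_offers_union_rejections: "C (offers P k \<union> rejections P k) = C (offers P k)"
proof -
  have YR: "offers P k \<union> rejections P k \<subseteq> X" using offers_subset rejections_subset by blast
  have "C (offers P k \<union> rejections P k) \<subseteq> offers P k"
  proof
    fix z assume z: "z \<in> C (offers P k \<union> rejections P k)"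
    show "z \<in> offers P k"
    proof (rule ccontr)
      assume "z \<notin> offers P k"
      then have "z \<in> rejections P k" using z C_subset by blast
      then obtain j where j: "j < k" "z \<in> offers P j" "z \<notin> C (offers P j)"
        using rejected_in_earlier_round by blast
      have "offers P j \<subseteq> offers P k \<union> rejections P k" using offers_persist[of j k] j(1) by auto
      then have "offers P j \<inter> C (offers P k \<union> rejections P k) \<subseteq> C (offers P j)"
        using YR by (rule substitutes)
      then show False using j z by blast
    qed
  qed
  then show ?thesis using irrelevance_of_rejected[OF _ _ YR] by blast
qed

lemma card_rejections_ge: "\<forall>k. C (offers P k) \<noteq> offers P k \<Longrightarrow> k \<le> card (rejections P k)"
proof (induction k)
  case 0
  then show ?case by simp
next
  case (Suc k)
  have "offers P k - C (offers P k) \<noteq> {}" using Suc.prems C_subset[of "offers P k"] by blast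
  then have "rejections P k \<subset> rejections P (Suc k)" using offers_subset[of P k] by (auto simp: rejections_Suc)
  moreover have "finite (rejections P (Suc k))" using rejections_subset finite_X by (rule finite_subset)
  ultimately have "card (rejections P k) < card (rejections P (Suc k))" by (rule psubset_card_mono[rotated])
  then show ?case using Suc by simp
qed

lemma gda_terminates: "\<exists>k. offers P k = C (offers P k)"
proof (rule ccontr)
  assume "\<not> ?thesis"
  then have "Suc (card X) \<le> card (rejections P (Suc (card X)))" using card_rejections_ge by metis
  moreover have "card (rejections P (Suc (card X))) \<le> card X" using rejections_subset finite_X by (rule card_mono[rotated])
  ultimately show False by simp
qed

definition final_round :: "('d, 'h) profile \<Rightarrow> nat" where
  "final_round P = (LEAST k. offers P k = C (offers P k))"

definition rejected :: "('d, 'h) profile \<Rightarrow> ('d, 'h) contract set" where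
  "rejected P = rejections P (final_round P)"

lemma gda_eq_offers: "gda X C P = offers P (final_round P)"
  unfolding gda_def final_round_def ..

lemma C_gda: "C (gda X C P) = gda X C P"
  using LeastI_ex[OF gda_terminates] unfolding gda_eq_offers final_round_def by simp

lemma gda_eq_Ch_D: "gda X C P = Ch_D P (X - rejected P)"
  unfolding gda_eq_offers rejected_def gda_Y_def ..

lemma C_gda_union_rejected: "C (gda X C P \<union> rejected P) = gda X C P"
  using C_offers_union_rejections C_gda unfolding gda_eq_offers rejected_def by simp

lemma gda_subset: "gda X C P \<subseteq> X - rejected P"
  unfolding gda_eq_offers rejected_def by (rule offers_subset)

lemma rejected_subset: "rejected P \<subseteq> X"
  unfolding rejected_def by (rule rejections_subset)

lemma gda_best:
  assumes "valid_profile D X P" "z \<in> X - rejected P" "P (doc z) (Some z) None"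
  shows "\<exists>y\<in>gda X C P. doc y = doc z \<and> (y = z \<or> P (doc z) (Some y) (Some z))"
proof -
  obtain y where y: "y \<in> Ch_D P (X - rejected P)" "doc y = doc z"
    using Ch_D_exists[OF assms(1) _ assms(2,3)] by blast
  then have "y = z \<or> P (doc z) (Some y) (Some z)"
    using Ch_D_best[OF y(1) assms(2)] by auto
  then show ?thesis using y gda_eq_Ch_D by auto
qed

text \<open>The contracts outside Y' that the hospitals keep from T \<union> Y' would block Y'.\<close>
lemma C_union_choice_stable:
  assumes Y': "choice_stable X C P Y'" and T: "T \<subseteq> Ch_D P A" and A: "A \<subseteq> X" "Y' \<subseteq> A"
  shows "C (T \<union> Y') = Y'"
proof -
  define S where "S = T \<union> Y'"
  define Z where "Z = C S - Y'"
  have SX: "S \<subseteq> X" unfolding S_def using T A Ch_D_subset by blast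
  have CS: "C S \<subseteq> S" by (rule C_subset)
  have SA: "S \<subseteq> A" unfolding S_def using T A Ch_D_subset by blast
  have "C (Y' \<union> Z) = C S"
    by (rule irrelevance_of_rejected) (use CS SX in \<open>auto simp: Z_def S_def\<close>)
  then have "Z \<subseteq> C (Y' \<union> Z)" unfolding Z_def by blast
  moreover have "Z \<subseteq> Ch_D P (Y' \<union> Z)"
  proof
    fix z assume z: "z \<in> Z"
    then have "z \<in> Ch_D P A" using T CS unfolding Z_def S_def by blast
    then show "z \<in> Ch_D P (Y' \<union> Z)"
      by (rule Ch_D_restrict) (use z A SA CS in \<open>auto simp: Z_def\<close>)
  qed
  moreover have "Z \<subseteq> X" "Z \<inter> Y' = {}" using CS SX unfolding Z_def by blast+
  ultimately have "Z = {}" using choice_stableD(4)[OF Y'] by blast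
  then have "C Y' = C S"
    by (intro irrelevance_of_rejected) (use SX in \<open>auto simp: Z_def S_def\<close>)
  then show ?thesis using choice_stableD(3)[OF Y'] unfolding S_def by simp
qed

lemma choice_stable_disjoint_rejections:
  assumes Y': "choice_stable X C P Y'"
  shows "Y' \<inter> rejections P k = {}"
proof (induction k)
  case 0
  then show ?case by simp
next
  case (Suc k)
  have Y'X: "Y' \<subseteq> X" by (rule choice_stableD(1)[OF Y'])
  have "C (offers P k \<union> Y') = Y'"
    using Suc.IH Y'X by (intro C_union_choice_stable[OF Y' _ Diff_subset]) (auto simp: gda_Y_def)
  then have "Y' \<inter> offers P k \<subseteq> C (offers P k)"
    using substitutes[of "offers P k" "offers P k \<union> Y'"] Y'X offers_subset by blast
  then show ?case using Suc.IH unfolding rejections_Suc by blast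
qed

lemma choice_stable_gda:
  assumes P: "valid_profile D X P"
  shows "choice_stable X C P (gda X C P)"
  unfolding choice_stable_def
proof (intro conjI allI impI notI)
  let ?Y = "gda X C P"
  show "?Y \<subseteq> X" "C ?Y = ?Y" using gda_subset C_gda by auto
  show "Ch_D P ?Y = ?Y" using gda_eq_Ch_D Ch_D_idem by metis
  fix Z assume Z: "Z \<subseteq> X" "Z \<noteq> {}" "Z \<inter> ?Y = {}" "Z \<subseteq> C (?Y \<union> Z)" "Z \<subseteq> Ch_D P (?Y \<union> Z)"
  have "Z \<subseteq> rejected P"
  proof
    fix z assume z: "z \<in> Z"
    show "z \<in> rejected P"
    proof (rule ccontr)
      assume "z \<notin> rejected P"
      then have zX: "z \<in> X - rejected P" using Z(1) z by blast
      have zc: "z \<in> Ch_D P (?Y \<union> Z)" using Z(5) z by blast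
      obtain y where y: "y \<in> ?Y" "doc y = doc z" "y = z \<or> P (doc z) (Some y) (Some z)"
        using gda_best[OF P zX Ch_D_acceptable[OF zc]] by blast
      have "y \<noteq> z" using y(1) z Z(3) by blast
      then show False
        using y Ch_D_best[OF zc, of y] pref_asym[OF P, of z y] zX gda_subset by blast
    qed
  qed
  then have "C (?Y \<union> Z) = C (?Y \<union> rejected P)"
    using C_gda_union_rejected[of P] gda_subset[of P] rejected_subset[of P]
    by (intro irrelevance_of_rejected) blast+
  then show False using Z C_gda_union_rejected by auto
qed

lemma gda_doctor_optimal:
  assumes P: "valid_profile D X P" and Y': "choice_stable X C P Y'" and "y' \<in> Y'"
  shows "\<exists>y\<in>gda X C P. doc y = doc y' \<and> (y = y' \<or> P (doc y') (Some y) (Some y'))"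
proof (rule gda_best[OF P])
  show "y' \<in> X - rejected P"
    using choice_stable_disjoint_rejections[OF Y'] choice_stableD(1)[OF Y'] assms(3)
    unfolding rejected_def by blast
  show "P (doc y') (Some y') None"
    using Ch_D_acceptable[of y' P Y'] choice_stableD(2)[OF Y'] assms(3) by simp
qed

lemma C_gda_union_choice_stable:
  assumes Y': "choice_stable X C P Y'"
  shows "C (gda X C P \<union> Y') = Y'"
proof (rule C_union_choice_stable[OF Y'])
  show "gda X C P \<subseteq> Ch_D P (X - rejected P)" by (simp add: gda_eq_Ch_D)
  show "Y' \<subseteq> X - rejected P"
    using choice_stable_disjoint_rejections[OF Y'] choice_stableD(1)[OF Y'] unfolding rejected_def by blast
qed simp

lemma inj_on_doc_choice_stable:
  assumes "valid_profile D X P" "choice_stable X C P Y'"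
  shows "inj_on doc Y'"
  using Ch_D_unique[OF assms(1) choice_stableD(1)[OF assms(2)]] choice_stableD(2)[OF assms(2)]
  by (metis inj_onI)

text \<open>Rural hospitals theorem, doctor side: by the law of aggregate demand the stable Y' has at
  least as many contracts as the doctor-optimal outcome, whose doctors include those of Y'.\<close>
lemma doc_gda_eq_doc_choice_stable:
  assumes P: "valid_profile D X P" and Y': "choice_stable X C P Y'"
  shows "doc ` gda X C P = doc ` Y'"
proof -
  let ?Y = "gda X C P"
  have Y'X: "Y' \<subseteq> X" by (rule choice_stableD(1)[OF Y'])
  have "card ?Y \<le> card Y'"
    using aggregate_demand[of ?Y "?Y \<union> Y'"] Y'X gda_subset C_gda_union_choice_stable[OF Y'] C_gda
    by auto
  then have card_le: "card (doc ` ?Y) \<le> card (doc ` Y')"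
    using inj_on_doc_choice_stable[OF P] choice_stable_gda[OF P] Y' by (simp add: card_image)
  have sub: "doc ` Y' \<subseteq> doc ` ?Y"
  proof
    fix d assume "d \<in> doc ` Y'"
    then obtain y' where "y' \<in> Y'" "d = doc y'" by blast
    then show "d \<in> doc ` ?Y" using gda_doctor_optimal[OF P Y'] by (metis image_eqI)
  qed
  have "finite (doc ` ?Y)" using gda_subset finite_X by (meson finite_Diff finite_imageI finite_subset)
  then show ?thesis using card_subset_eq sub card_le card_mono by (metis le_antisym)
qed

lemma inj_on_doc_gda: "valid_profile D X P \<Longrightarrow> inj_on doc (gda X C P)"
  using inj_on_doc_choice_stable choice_stable_gda by blast

lemma gda_acceptable: "y \<in> gda X C P \<Longrightarrow> P (doc y) (Some y) None"
  using Ch_D_acceptable gda_eq_Ch_D by metis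

lemma outcome_gda_eq_Some_iff:
  "valid_profile D X P \<Longrightarrow> outcome (gda X C P) d = Some y \<longleftrightarrow> y \<in> gda X C P \<and> doc y = d"
  by (rule outcome_eq_Some_iff[OF inj_on_doc_gda])

lemma outcome_gda_in_alternatives:
  assumes "valid_profile D X P"
  shows "outcome (gda X C P) d \<in> alternatives X d"
proof (cases "outcome (gda X C P) d")
  case (Some y)
  then have "y \<in> gda X C P" "doc y = d" using outcome_gda_eq_Some_iff[OF assms] by blast+
  then show ?thesis using Some gda_subset by auto
qed simp

lemma acceptable_if_pref_outcome_gda:
  assumes P: "valid_profile D X P" and "d \<in> D" "a \<in> alternatives X d"
    and pref: "P d a (outcome (gda X C P) d)"
  shows "P d a None"
proof (cases "outcome (gda X C P) d")
  case (Some y)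
  then have "y \<in> gda X C P" "doc y = d" using outcome_gda_eq_Some_iff[OF P] by blast+
  moreover have "valid_pref X d (P d)" using P assms(2) by (simp add: valid_profile_def)
  ultimately show ?thesis
    using gda_acceptable[of y P] pref Some gda_subset assms(3) valid_pref_trans[of X d "P d" a "Some y" None]
    by auto
qed (use pref in simp)

lemma preferred_contract_rejected:
  assumes P: "valid_profile D X P" and z: "z \<in> X" "z \<notin> gda X C P"
    and pref: "P (doc z) (Some z) (outcome (gda X C P) (doc z))"
  shows "z \<in> rejected P"
proof (rule ccontr)
  assume "z \<notin> rejected P"
  then have zX: "z \<in> X - rejected P" using z by blast
  have z_acc: "P (doc z) (Some z) None"
    using acceptable_if_pref_outcome_gda[OF P _ _ pref] doc_in_D z(1) by simp
  obtain y where y: "y \<in> gda X C P" "doc y = doc z" "y = z \<or> P (doc z) (Some y) (Some z)"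
    using gda_best[OF P zX z_acc] by blast
  then have "outcome (gda X C P) (doc z) = Some y" using outcome_gda_eq_Some_iff[OF P] by blast
  then show False
    using y z pref pref_asym[OF P, of z y] gda_subset by auto
qed

end

section \<open>Strategy-proofness\<close>

lemma choice_stable_only_acceptable_unmatched:
  assumes W: "choice_stable X C P W" and "d \<notin> doc ` W" and x: "P d (Some x) None"
  shows "choice_stable X C (P(d := only_acceptable x p)) W"
proof (rule choice_stable_transfer[OF W])
  let ?Q = "P(d := only_acceptable x p)"
  have same: "?Q (doc z) = P (doc z)" if "z \<in> W" for z
    using that assms(2) by auto
  show "Ch_D ?Q W = W"
  proof (intro equalityI subsetI)
    fix z assume "z \<in> Ch_D ?Q W"
    then show "z \<in> W" using Ch_D_subset by blast
  next
    fix z assume "z \<in> W"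
    then show "z \<in> Ch_D ?Q W" using Ch_D_local[of ?Q z P W] same choice_stableD(2)[OF W] by simp
  qed
  fix Z assume Z: "Z \<subseteq> X" "Z \<inter> W = {}" "Z \<subseteq> Ch_D ?Q (W \<union> Z)"
  have only_x: "u = x" if "u \<in> Z" "doc u = d" for u
  proof -
    have "u \<in> Ch_D ?Q (W \<union> Z)" using Z(3) that(1) by blast
    then have "only_acceptable x p (Some u) None" using Ch_D_acceptable that(2) by fastforce
    then show ?thesis by (simp add: only_acceptable_def)
  qed
  show "Z \<subseteq> Ch_D P (W \<union> Z)"
  proof
    fix z assume z: "z \<in> Z"
    show "z \<in> Ch_D P (W \<union> Z)"
    proof (cases "doc z = d")
      case False
      moreover have "z \<in> Ch_D ?Q (W \<union> Z)" using Z(3) z by blast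
      ultimately show ?thesis using Ch_D_local[of ?Q z P] by simp
    next
      case True
      then have zx: "z = x" using only_x z by blast
      show ?thesis unfolding Ch_D_iff
      proof (intro conjI ballI impI)
        show "z \<in> W \<union> Z" using z by blast
        show "P (doc z) (Some z) None" using x zx True by simp
        fix u assume u: "u \<in> W \<union> Z" "doc u = doc z \<and> u \<noteq> z"
        have "u \<notin> W"
        proof
          assume "u \<in> W"
          then have "doc u \<in> doc ` W" by (rule imageI)
          then show False using u True assms(2) by simp
        qed
        then have "u \<in> Z" using u by blast
        then have "u = x" using only_x u True by simp
        then show "P (doc z) (Some z) (Some u)" using u zx by simp
      qed
    qed
  qed
qed

context choice_system
begin

lemma choice_stable_only_acceptable_matched:
  assumes P: "valid_profile D X P" and Y': "choice_stable X C P Y'" and x: "x \<in> Y'" "doc x = d"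
  shows "choice_stable X C (P(d := only_acceptable x p)) Y'"
proof (rule choice_stable_transfer[OF Y'])
  let ?Q = "P(d := only_acceptable x p)"
  have inj: "inj_on doc Y'" by (rule inj_on_doc_choice_stable[OF P Y'])
  have "?Q (doc z) (Some z) None" if "z \<in> Y'" for z
  proof (cases "doc z = d")
    case True
    then have "z = x" using inj x that by (auto dest: inj_onD)
    then show ?thesis using True by (simp add: only_acceptable_def)
  next
    case False
    then show ?thesis
      using that choice_stableD(2)[OF Y'] Ch_D_eq_self_iff[OF inj, of P] by auto
  qed
  then show "Ch_D ?Q Y' = Y'" using Ch_D_eq_self_iff[OF inj] by blast
  fix Z assume Z: "Z \<subseteq> X" "Z \<inter> Y' = {}" "Z \<subseteq> Ch_D ?Q (Y' \<union> Z)"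
  show "Z \<subseteq> Ch_D P (Y' \<union> Z)"
  proof
    fix z assume z: "z \<in> Z"
    have "doc z \<noteq> d"
    proof
      assume "doc z = d"
      moreover have "z \<in> Ch_D ?Q (Y' \<union> Z)" using Z(3) z by blast
      ultimately have "only_acceptable x p (Some z) None" using Ch_D_acceptable by fastforce
      then have "z = x" by (simp add: only_acceptable_def)
      then show False using z x Z(2) by blast
    qed
    moreover have "z \<in> Ch_D ?Q (Y' \<union> Z)" using Z(3) z by blast
    ultimately show "z \<in> Ch_D P (Y' \<union> Z)" using Ch_D_local[of ?Q z P] by simp
  qed
qed

lemma choice_stable_of_truncate_at:
  assumes P: "valid_profile D X P" and d: "d \<in> D" and x: "x \<in> X" "doc x = d" "P d (Some x) None"
    and W: "choice_stable X C (P(d := truncate_at (P d) x)) W"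
    and w: "w \<in> W" "doc w = d" "w = x \<or> P d (Some w) (Some x)"
  shows "choice_stable X C P W"
proof (rule choice_stable_transfer[OF W])
  let ?T = "P(d := truncate_at (P d) x)"
  have valid: "valid_pref X d (P d)" using P d by (simp add: valid_profile_def)
  have T: "valid_profile D X ?T"
    using valid_profile_update[OF P valid_truncate_at[OF valid x(1,2)]] .
  have inj: "inj_on doc W" by (rule inj_on_doc_choice_stable[OF T W])
  have wX: "w \<in> X" using w(1) choice_stableD(1)[OF W] by blast
  have w_acc: "P d (Some w) None"
    using w(3) x(3) valid_pref_trans[OF valid, of "Some w" "Some x" None] wX w(2) x(1,2) by auto
  have "P (doc z) (Some z) None" if "z \<in> W" for z
  proof (cases "doc z = d")
    case True
    then show ?thesis using inj w that w_acc by (auto dest: inj_onD)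
  next
    case False
    then show ?thesis
      using that choice_stableD(2)[OF W] Ch_D_eq_self_iff[OF inj, of ?T] by auto
  qed
  then show "Ch_D P W = W" using Ch_D_eq_self_iff[OF inj] by blast
  fix Z assume Z: "Z \<subseteq> X" "Z \<inter> W = {}" "Z \<subseteq> Ch_D P (W \<union> Z)"
  show "Z \<subseteq> Ch_D ?T (W \<union> Z)"
  proof
    fix z assume z: "z \<in> Z"
    then have zc: "z \<in> Ch_D P (W \<union> Z)" using Z(3) by blast
    show "z \<in> Ch_D ?T (W \<union> Z)"
    proof (cases "doc z = d")
      case False
      then show ?thesis using zc Ch_D_local[of ?T z P] by simp
    next
      case True
      have "z \<noteq> w" using z w(1) Z(2) by blast
      then have "P d (Some z) (Some w)" using Ch_D_best[OF zc, of w] w True by simp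
      then have "P d (Some z) (Some x)"
        using w(3) valid_pref_trans[OF valid, of "Some z" "Some w" "Some x"] z Z(1) True wX w(2) x(1,2)
        by auto
      then show ?thesis
        using zc True unfolding Ch_D_iff by (simp add: truncate_at_def)
    qed
  qed
qed

text \<open>Truncating her list just below x leaves d unmatched whenever she would prefer x to
  her current outcome: a contract at least as good as x in the truncated outcome would, by
  doctor-optimality, also be reachable under her true preferences.\<close>
lemma unmatched_gda_truncate_at:
  assumes P: "valid_profile D X P" and d: "d \<in> D" and x: "x \<in> X" "doc x = d"
    and better: "P d (Some x) (outcome (gda X C P) d)"
  shows "d \<notin> doc ` gda X C (P(d := truncate_at (P d) x))"
proof
  let ?T = "P(d := truncate_at (P d) x)"
  let ?W = "gda X C ?T"
  have valid: "valid_pref X d (P d)" using P d by (simp add: valid_profile_def)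
  have T: "valid_profile D X ?T"
    using valid_profile_update[OF P valid_truncate_at[OF valid x]] .
  have x_acc: "P d (Some x) None" using acceptable_if_pref_outcome_gda[OF P d _ better] x by simp
  assume "d \<in> doc ` ?W"
  then obtain w where w: "w \<in> ?W" "doc w = d" by blast
  have "truncate_at (P d) x (Some w) None" using gda_acceptable[OF w(1)] w(2) by simp
  then have w_ge: "w = x \<or> P d (Some w) (Some x)" by (simp add: truncate_at_def)
  have "choice_stable X C P ?W"
    using choice_stable_of_truncate_at[OF P d x x_acc choice_stable_gda[OF T] w w_ge] .
  then obtain y where y: "y \<in> gda X C P" "doc y = d" "y = w \<or> P d (Some y) (Some w)"
    using gda_doctor_optimal[OF P _ w(1)] w(2) by blast
  then have "outcome (gda X C P) d = Some y" using outcome_gda_eq_Some_iff[OF P] by blast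
  moreover have "y = x \<or> P d (Some y) (Some x)"
  proof -
    have "w \<in> X" "y \<in> X" using w(1) y(1) gda_subset by blast+
    then show ?thesis
      using y w w_ge x valid_pref_trans[OF valid, of "Some y" "Some w" "Some x"] by auto
  qed
  ultimately show False
    using better valid_pref_asym[OF valid, of "Some x" "Some y"] valid_pref_irrefl[OF valid, of "Some x"]
      x y(1,2) gda_subset by auto
qed

theorem gda_strategy_proof: "strategy_proof D X (gda X C)"
  unfolding strategy_proof_def Let_def
proof (intro allI impI)
  fix P d p'
  assume P: "valid_profile D X P" and d: "d \<in> D" and p': "valid_pref X d p'"
  let ?P' = "P(d := p')"
  let ?a = "outcome (gda X C P) d" and ?b = "outcome (gda X C ?P') d"
  have P': "valid_profile D X ?P'" by (rule valid_profile_update[OF P p'])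
  have valid: "valid_pref X d (P d)" using P d by (simp add: valid_profile_def)
  show "?a = ?b \<or> P d ?a ?b"
  proof (rule ccontr)
    assume "\<not> (?a = ?b \<or> P d ?a ?b)"
    then have ba: "P d ?b ?a"
      using valid_pref_total[OF valid outcome_gda_in_alternatives[OF P] outcome_gda_in_alternatives[OF P']] by blast
    have "P d ?b None"
      using acceptable_if_pref_outcome_gda[OF P d outcome_gda_in_alternatives[OF P'] ba] .
    then obtain x where x: "?b = Some x"
      using valid_pref_irrefl[OF valid None_in_alternatives] by (cases ?b) auto
    then have x_in: "x \<in> gda X C ?P'" "doc x = d" using outcome_gda_eq_Some_iff[OF P'] by blast+
    then have xX: "x \<in> X" using gda_subset by blast
    let ?T = "P(d := truncate_at (P d) x)"
    let ?Q = "P(d := only_acceptable x (P d))"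
    have T: "valid_profile D X ?T" by (rule valid_profile_update[OF P valid_truncate_at[OF valid xX x_in(2)]])
    have Q: "valid_profile D X ?Q" by (rule valid_profile_update[OF P valid_only_acceptable[OF valid]])
    have unmatched: "d \<notin> doc ` gda X C ?T"
      using unmatched_gda_truncate_at[OF P d xX x_in(2)] ba x by simp
    have "choice_stable X C ?Q (gda X C ?T)"
      using choice_stable_only_acceptable_unmatched[OF choice_stable_gda[OF T] unmatched, of x "P d"]
      by (simp add: truncate_at_def)
    moreover have "choice_stable X C ?Q (gda X C ?P')"
      using choice_stable_only_acceptable_matched[OF P' choice_stable_gda[OF P'] x_in, of "P d"] by simp
    then have "d \<in> doc ` gda X C ?Q"
      using gda_doctor_optimal[OF Q _ x_in(1)] x_in(2) by (metis image_eqI)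
    ultimately show False
      using unmatched doc_gda_eq_doc_choice_stable[OF Q] by blast
  qed
qed

end

section \<open>The greedy market\<close>

lemma is_matching_if_inj_on_doc: "finite Y \<Longrightarrow> inj_on doc Y \<Longrightarrow> is_matching Y"
  unfolding is_matching_def contracts_of_doc_def
  by (auto simp: card_le_Suc0_iff_eq dest: inj_onD)

lemma hosp_greedy_set: "x \<in> greedy_set L b (contracts_of_hosp A h) \<Longrightarrow> x \<in> A \<and> hosp x = h"
  by (simp add: greedy_set_def contracts_of_hosp_def)

locale greedy_market =
  fixes D :: "'d set" and H :: "'h set" and X :: "('d, 'h) contract set"
    and B :: "'h \<Rightarrow> real" and ord :: "('d, 'h) contract list"
  assumes market: "market D H X B"
    and distinct_ord: "distinct ord" and set_ord: "set ord = X"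
begin

abbreviation L :: "('d, 'h) contract list" where
  "L \<equiv> sort_key wage ord"

abbreviation Ch_H :: "('d, 'h) contract set \<Rightarrow> ('d, 'h) contract set" where
  "Ch_H \<equiv> greedy_ChH H B ord"

lemma finite_H: "finite H" and finite_X: "finite X"
  and market_contracts: "\<forall>x\<in>X. doc x \<in> D \<and> hosp x \<in> H \<and> 0 < wage x \<and> wage x \<le> B (hosp x)"
  and budget_pos: "\<forall>h\<in>H. 0 < B h"
  using market unfolding market_def by blast+

lemma greedy_sorted: "h \<in> H \<Longrightarrow> greedy L (B h)"
  using distinct_ord set_ord market_contracts budget_pos
  by unfold_locales (auto simp: distinct_sort intro: less_imp_le)

lemma Ch_H_eq: "Ch_H A = (\<Union>h\<in>H. greedy_set L (B h) (contracts_of_hosp A h))"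
  unfolding greedy_ChH_def using distinct_ord set_ord market_contracts
  by (intro SUP_cong refl greedy_choice_eq_greedy_set) auto

lemma contracts_of_hosp_Ch_H:
  assumes "h \<in> H"
  shows "contracts_of_hosp (Ch_H A) h = greedy_set L (B h) (contracts_of_hosp A h)"
proof (intro equalityI subsetI)
  fix x assume "x \<in> contracts_of_hosp (Ch_H A) h"
  then obtain h' where "h' \<in> H" "x \<in> greedy_set L (B h') (contracts_of_hosp A h')" "hosp x = h"
    unfolding Ch_H_eq contracts_of_hosp_def by blast
  moreover from this have "h' = h" using hosp_greedy_set[of x L "B h'" A h'] by simp
  ultimately show "x \<in> greedy_set L (B h) (contracts_of_hosp A h)" by simp
next
  fix x assume "x \<in> greedy_set L (B h) (contracts_of_hosp A h)"
  then show "x \<in> contracts_of_hosp (Ch_H A) h"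
    using assms hosp_greedy_set[of x L "B h" A h] unfolding Ch_H_eq contracts_of_hosp_def by blast
qed

lemma card_Ch_H: "card (Ch_H A) = (\<Sum>h\<in>H. card (greedy_set L (B h) (contracts_of_hosp A h)))"
  unfolding Ch_H_eq
proof (rule card_UN_disjoint[OF finite_H])
  show "\<forall>h\<in>H. finite (greedy_set L (B h) (contracts_of_hosp A h))"
    using greedy.finite_greedy_set[OF greedy_sorted] by blast
  show "\<forall>i\<in>H. \<forall>j\<in>H. i \<noteq> j \<longrightarrow>
      greedy_set L (B i) (contracts_of_hosp A i) \<inter> greedy_set L (B j) (contracts_of_hosp A j) = {}"
  proof (intro ballI impI equals0I)
    fix i j x assume "i \<noteq> j" "x \<in> greedy_set L (B i) (contracts_of_hosp A i) \<inter> greedy_set L (B j) (contracts_of_hosp A j)"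
    then show False using hosp_greedy_set[of x L "B i" A i] hosp_greedy_set[of x L "B j" A j] by auto
  qed
qed

sublocale choice_system D X "greedy_ChH H B ord"
proof
  show "finite X" by (rule finite_X)
  show "\<forall>x\<in>X. doc x \<in> D" using market_contracts by blast
  show "Ch_H A \<subseteq> A" for A
  proof
    fix x assume "x \<in> Ch_H A"
    then obtain h where "x \<in> greedy_set L (B h) (contracts_of_hosp A h)" unfolding Ch_H_eq by blast
    then show "x \<in> A" using hosp_greedy_set[of x L "B h" A h] by simp
  qed
next
  fix A A' :: "('d, 'h) contract set" assume A: "A \<subseteq> A'"
  have hosp_A: "contracts_of_hosp A h \<subseteq> contracts_of_hosp A' h" for h
    using A by (auto simp: contracts_of_hosp_def)
  show "A \<inter> Ch_H A' \<subseteq> Ch_H A"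
  proof
    fix x assume x: "x \<in> A \<inter> Ch_H A'"
    then obtain h where h: "h \<in> H" "x \<in> greedy_set L (B h) (contracts_of_hosp A' h)"
      unfolding Ch_H_eq by blast
    then have "x \<in> contracts_of_hosp A h"
      using x hosp_greedy_set[of x L "B h" A' h] by (simp add: contracts_of_hosp_def)
    then have "x \<in> greedy_set L (B h) (contracts_of_hosp A h)"
      using greedy.greedy_set_substitutable[OF greedy_sorted[OF h(1)] hosp_A] h(2) by blast
    then show "x \<in> Ch_H A" using h(1) unfolding Ch_H_eq by blast
  qed
  show "card (Ch_H A) \<le> card (Ch_H A')"
    unfolding card_Ch_H using greedy.card_greedy_set_mono[OF greedy_sorted hosp_A] by (intro sum_mono)
qed

lemma contracts_of_hosp_gda:
  "h \<in> H \<Longrightarrow> greedy_set L (B h) (contracts_of_hosp (gda X Ch_H P) h) = contracts_of_hosp (gda X Ch_H P) h"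
  using contracts_of_hosp_Ch_H[of h "gda X Ch_H P"] C_gda by simp

lemma feasible_gda: "feasible H B (gda X Ch_H P)"
  unfolding feasible_def w_h_def
  using greedy.wsum_greedy_set_le[OF greedy_sorted] contracts_of_hosp_gda by metis

text \<open>A blocking coalition Z of hospital h consists of contracts of gda or of rejected ones, so
  the greedy choice of h from gda plus the rejected contracts, which is h's part of gda, has at
  least as many contracts as Z; with equal contract values Z cannot be strictly better.\<close>
lemma not_blocks_gda:
  assumes P: "valid_profile D X P" and h: "h \<in> H"
    and f: "\<gamma> > 0" "\<forall>Y\<subseteq>contracts_of_hosp X h. f h Y = \<gamma> * real (card Y)"
  shows "\<not> blocks X P f B h Z (gda X Ch_H P)"
proof
  let ?Y = "gda X Ch_H P"
  assume "blocks X P f B h Z ?Y"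
  then have Z: "Z \<subseteq> contracts_of_hosp X h" "\<forall>x\<in>Z - ?Y. P (doc x) (Some x) (outcome ?Y (doc x))"
    and better: "f h Z > f h (contracts_of_hosp ?Y h)" and budget: "w_h h Z \<le> B h"
    unfolding blocks_def by blast+
  have "contracts_of_hosp Z h = Z" using Z(1) by (auto simp: contracts_of_hosp_def)
  then have wsum_Z: "wsum Z \<le> B h" using budget by (simp add: w_h_def)
  have "Z \<subseteq> contracts_of_hosp (?Y \<union> rejected P) h"
  proof
    fix z assume z: "z \<in> Z"
    then have "z \<in> X" "hosp z = h" using Z(1) by (auto simp: contracts_of_hosp_def)
    moreover have "z \<in> ?Y \<union> rejected P"
      using z Z(2) preferred_contract_rejected[OF P \<open>z \<in> X\<close>] by blast
    ultimately show "z \<in> contracts_of_hosp (?Y \<union> rejected P) h" by (simp add: contracts_of_hosp_def)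
  qed
  moreover have "contracts_of_hosp (?Y \<union> rejected P) h \<subseteq> set L"
    using gda_subset rejected_subset set_ord by (auto simp: contracts_of_hosp_def)
  ultimately have "card Z \<le> card (greedy_set L (B h) (contracts_of_hosp (?Y \<union> rejected P) h))"
    using greedy.card_le_card_greedy_set[OF greedy_sorted[OF h] _ wsum_Z] by blast
  also have "\<dots> = card (contracts_of_hosp ?Y h)"
    using contracts_of_hosp_Ch_H[OF h, of "?Y \<union> rejected P"] C_gda_union_rejected by simp
  finally have card_le: "card Z \<le> card (contracts_of_hosp ?Y h)" .
  have "contracts_of_hosp ?Y h \<subseteq> contracts_of_hosp X h"
    using gda_subset by (auto simp: contracts_of_hosp_def)
  then have "f h (contracts_of_hosp ?Y h) = \<gamma> * real (card (contracts_of_hosp ?Y h))"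
    and "f h Z = \<gamma> * real (card Z)" using f(2) Z(1) by blast+
  then show False using better card_le f(1) by (simp add: mult_le_cancel_left_pos)
qed

lemma stable_gda:
  assumes P: "valid_profile D X P"
    and f: "\<forall>h\<in>H. \<exists>\<gamma>>0. \<forall>Y\<subseteq>contracts_of_hosp X h. f h Y = \<gamma> * real (card Y)"
  shows "stable H X P f B (gda X Ch_H P)"
  unfolding stable_def
proof (intro conjI)
  show "gda X Ch_H P \<subseteq> X" using gda_subset by blast
  show "is_matching (gda X Ch_H P)"
    using is_matching_if_inj_on_doc inj_on_doc_gda[OF P] finite_X gda_subset
    by (meson Diff_subset finite_subset subset_trans)
  show "feasible H B (gda X Ch_H P)" by (rule feasible_gda)
  show "\<not> (\<exists>h\<in>H. \<exists>Z. blocks X P f B h Z (gda X Ch_H P))"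
    using not_blocks_gda[OF P] f by blast
qed

end

theorem theorem8:
  fixes D :: "'d set" and H :: "'h set" and X :: "('d, 'h) contract set"
    and B :: "'h \<Rightarrow> real" and f :: "'h \<Rightarrow> ('d, 'h) contract set \<Rightarrow> real"
    and ord :: "('d, 'h) contract list"
  assumes "market D H X B"
    and "\<forall>h\<in>H. \<exists>\<gamma>>0. \<forall>Y\<subseteq>contracts_of_hosp X h. f h Y = \<gamma> * real (card Y)"
    and "distinct ord" and "set ord = X"
  shows "strategy_proof D X (gda X (greedy_ChH H B ord)) \<and>
         (\<forall>P. valid_profile D X P \<longrightarrow> stable H X P f B (gda X (greedy_ChH H B ord) P))"
proof -
  interpret greedy_market D H X B ord
    using assms(1,3,4) by unfold_locales
  show ?thesis using gda_strategy_proof stable_gda assms(2) by blast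
qed

end
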